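(* Consider, on a uniform one-dimensional grid $x_i=x_0+ih$, the semi-discrete scheme for $\partial_t u+\partial_x f(u)=s(x,t)$ (with $f$ a smooth nonlinear function and $s$ smooth) $$\Big(\frac{du}{dt}\Big)_i+\frac{1}{24}\Big[\Big(\frac{du}{dt}\Big)_{i+1}-2\Big(\frac{du}{dt}\Big)_i+\Big(\frac{du}{dt}\Big)_{i-1}\Big]+\frac{\phi_{i+1/2}-\phi_{i-1/2}}{h}=s(x_i)+\frac{1}{24}\big[s(x_{i+1})-2s(x_i)+s(x_{i-1})\big],$$ where $\phi_{i+1/2}=\tfrac12[f(u_L)+f(u_R)]-\tfrac12\,|f'(\bar u_{i+1/2})|\,(u_R-u_L)$ with $\bar u_{i+1/2}$ an intermediate state at the face $x_{i+1/2}$, and $u_L,u_R$ are given by the reconstruction with $\kappa=1/2$: $$u_L=u_i+\tfrac14\big[(1-\kappa)(u_i-u_{i-1})+(1+\kappa)(u_{i+1}-u_i)\big],\quad u_R=u_{i+1}-\tfrac14\big[(1-\kappa)(u_{i+1}-u_i)+(1+\kappa)(u_i-u_{i-1})\big].$$ (The source/time-derivative treatment is equivalently $s_i=s(x_i)+\tfrac{\kappa_s}{4}[s(x_{i+1})-2s(x_i)+s(x_{i-1})]$ with $\kappa_s=1/6$.) Then, for a smooth exact solution $u$ of $\partial_tu+\partial_xf(u)=s$ substituted pointwise ($u_i=u(x_i,t)$), the second-order truncation error is factored as $-\tfrac{1}{24}(u_t+f_x-s)_{xx}h^2$ and hence vanishes, so the truncation error of the scheme is $O(h^3)$, for general nonlinear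 $f$.
   Context: This is the one-dimensional U-MUSCL scheme with point-valued solutions and the special source (and time-derivative) discretization called U-MUSCL-SSQ. The truncation error is the residual (left side minus right side) evaluated with the exact solution's point values. *)

theory Defs
  imports "HOL-Analysis.Analysis" "HOL-Library.Landau_Symbols"
begin

definition smooth_fun :: "(real \<Rightarrow> real) \<Rightarrow> bool" where
  "smooth_fun g \<longleftrightarrow> (\<forall>n x. ((deriv ^^ n) g) differentiable (at x))"

text \<open>U-MUSCL reconstruction at the face j+1/2 (between grid points j and j+1),
  for point values U indexed by integers.\<close>
definition muscl_uL :: "real \<Rightarrow> (int \<Rightarrow> real) \<Rightarrow> int \<Rightarrow> real" where
  "muscl_uL \<kappa> U j = U j + 1/4 * ((1 - \<kappa>) * (U j - U (j - 1)) + (1 + \<kappa>) * (U (j + 1) - U j))"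

definition muscl_uR :: "real \<Rightarrow> (int \<Rightarrow> real) \<Rightarrow> int \<Rightarrow> real" where
  "muscl_uR \<kappa> U j = U (j + 1) - 1/4 * ((1 - \<kappa>) * (U (j + 2) - U (j + 1)) + (1 + \<kappa>) * (U (j + 1) - U j))"

text \<open>Upwind (Rusanov-type) numerical flux at face j+1/2; the intermediate state
  is given by the averaging function m applied to (uL, uR).\<close>
definition num_flux :: "(real \<Rightarrow> real) \<Rightarrow> (real \<Rightarrow> real \<Rightarrow> real) \<Rightarrow> real \<Rightarrow> (int \<Rightarrow> real) \<Rightarrow> int \<Rightarrow> real" where
  "num_flux f m \<kappa> U j =
     (let a = muscl_uL \<kappa> U j; b = muscl_uR \<kappa> U j
      in (f a + f b) / 2 - 1/2 * \<bar>deriv f (m a b)\<bar> * (b - a))"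

definition trunc_err ::
  "(real \<Rightarrow> real) \<Rightarrow> (real \<Rightarrow> real \<Rightarrow> real) \<Rightarrow> real \<Rightarrow>
   (real \<Rightarrow> real \<Rightarrow> real) \<Rightarrow> (real \<Rightarrow> real \<Rightarrow> real) \<Rightarrow> real \<Rightarrow> real \<Rightarrow> real \<Rightarrow> real" where
  "trunc_err f m \<kappa> u s h x t =
     (let U = (\<lambda>k::int. u (x + of_int k * h) t);
          V = (\<lambda>k::int. deriv (\<lambda>\<tau>. u (x + of_int k * h) \<tau>) t);
          S = (\<lambda>k::int. s (x + of_int k * h) t)
      in V 0 + (V 1 - 2 * V 0 + V (-1)) / 24
         + (num_flux f m \<kappa> U 0 - num_flux f m \<kappa> U (-1)) / h
         - (S 0 + (S 1 - 2 * S 0 + S (-1)) / 24))"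

end

theory Submission
  imports Defs
begin

(* Everything is expanded by Taylor's theorem around the grid point x. For kappa = 1/2 the
   face average (u_L + u_R)/2 reproduces cubics exactly, and the jump u_R - u_L of a cubic is
   the same multiple of h^3 at every face. Hence the central part of the numerical flux equals
   f(u) at the face up to O(h^4), and the dissipation terms of the two faces cancel up to O(h^4)
   (the difference of the wave speeds is O(h), the jumps are O(h^3)). The flux difference over h
   is then f(u)_x + f(u)_xxx h^2/24 + O(h^3), the 1/24 second differences contribute
   (u_t - s)_xx h^2/24, and the PDE f(u)_x = s - u_t cancels all terms up to order h^2. *)

lemma smooth_fun_has_real_derivative:
  assumes "smooth_fun g"
  shows "((deriv ^^ n) g has_real_derivative (deriv ^^ Suc n) g x) (at x)"
  using assms unfolding smooth_fun_def by (simp add: DERIV_deriv_iff_real_differentiable)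

lemma smooth_fun_isCont:
  assumes "smooth_fun g"
  shows "isCont ((deriv ^^ n) g) x"
  using assms unfolding smooth_fun_def by (simp add: differentiable_imp_continuous_within)

lemma smooth_fun_deriv:
  assumes "smooth_fun g"
  shows "smooth_fun (deriv g)"
  using assms unfolding smooth_fun_def by (metis funpow_Suc_right comp_apply)

lemma deriv_funpow_diff:
  assumes "smooth_fun g" "smooth_fun k"
  shows "(deriv ^^ n) (\<lambda>x. g x - k x) = (\<lambda>x. (deriv ^^ n) g x - (deriv ^^ n) k x)"
proof (induction n)
  case (Suc n)
  have "deriv (\<lambda>x. (deriv ^^ n) g x - (deriv ^^ n) k x) x = (deriv ^^ Suc n) g x - (deriv ^^ Suc n) k x" for x
    by (intro DERIV_imp_deriv DERIV_diff smooth_fun_has_real_derivative assms)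
  with Suc show ?case by auto
qed simp

lemma smooth_fun_diff:
  assumes "smooth_fun g" "smooth_fun k"
  shows "smooth_fun (\<lambda>x. g x - k x)"
  using assms unfolding smooth_fun_def deriv_funpow_diff[OF assms] by (auto intro: differentiable_diff)

lemma deriv_funpow_primitive:
  assumes "\<And>x. (F has_real_derivative G x) (at x)"
  shows "(deriv ^^ Suc n) F = (deriv ^^ n) G"
proof -
  have "deriv F = G" using assms by (auto intro: DERIV_imp_deriv)
  then show ?thesis by (simp add: funpow_Suc_right del: funpow.simps)
qed

lemma smooth_fun_primitive:
  assumes "\<And>x. (F has_real_derivative G x) (at x)" "smooth_fun G"
  shows "smooth_fun F"
  unfolding smooth_fun_def
proof (intro allI)
  fix n x show "(deriv ^^ n) F differentiable at x"
  proof (cases n)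
    case 0 then show ?thesis using assms(1) by (auto simp: real_differentiable_def)
  next
    case (Suc k) then show ?thesis
      using assms by (simp only: deriv_funpow_primitive[OF assms(1)] smooth_fun_def)
  qed
qed

lemma smooth_fun_taylor_uniform:
  assumes "smooth_fun g" "0 < n"
  obtains C where "\<And>c y. c \<in> {a..b} \<Longrightarrow> c + y \<in> {a..b} \<Longrightarrow>
      \<bar>g (c + y) - (\<Sum>m<n. (deriv ^^ m) g c / fact m * y ^ m)\<bar> \<le> C * \<bar>y\<bar> ^ n"
proof -
  have "compact ((deriv ^^ n) g ` {a..b})"
    using assms(1) by (intro compact_continuous_image continuous_at_imp_continuous_on) (auto intro: smooth_fun_isCont)
  then obtain B where B: "\<And>t. t \<in> {a..b} \<Longrightarrow> \<bar>(deriv ^^ n) g t\<bar> \<le> B"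
    by (fastforce dest!: compact_imp_bounded simp: bounded_real)
  have "\<bar>g (c + y) - (\<Sum>m<n. (deriv ^^ m) g c / fact m * y ^ m)\<bar> \<le> B / fact n * \<bar>y\<bar> ^ n"
    if c: "c \<in> {a..b}" and cy: "c + y \<in> {a..b}" for c y
  proof (cases "y = 0")
    case True
    then show ?thesis using assms(2) by (simp add: zero_power sum.lessThan_Suc_shift[where n = "n - 1", simplified])
  next
    case False
    obtain \<xi> where \<xi>: "if c + y < c then c + y < \<xi> \<and> \<xi> < c else c < \<xi> \<and> \<xi> < c + y"
      and taylor: "g (c + y) = (\<Sum>m<n. (deriv ^^ m) g c / fact m * (c + y - c) ^ m)
                              + (deriv ^^ n) g \<xi> / fact n * (c + y - c) ^ n"
      using Taylor[of n "\<lambda>m. (deriv ^^ m) g" g a b c "c + y"] assms c cy False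
        smooth_fun_has_real_derivative[OF assms(1)] by (auto simp del: funpow.simps)
    have "\<xi> \<in> {a..b}" using \<xi> c cy by (auto split: if_splits)
    then have "\<bar>(deriv ^^ n) g \<xi> / fact n * y ^ n\<bar> \<le> B / fact n * \<bar>y\<bar> ^ n"
      using B by (simp add: abs_mult power_abs divide_right_mono mult_right_mono)
    then show ?thesis using taylor by simp
  qed
  then show thesis using that by blast
qed

lemma smooth_fun_taylor_bigo:
  assumes "smooth_fun g" "0 < n" "(p \<longlongrightarrow> z) F" "(q \<longlongrightarrow> z) F"
  shows "(\<lambda>t. g (q t) - (\<Sum>m<n. (deriv ^^ m) g (p t) / fact m * (q t - p t) ^ m))
           \<in> O[F](\<lambda>t. (q t - p t) ^ n)"
proof -
  obtain C where C: "\<And>c y. c \<in> {z - 1..z + 1} \<Longrightarrow> c + y \<in> {z - 1..z + 1} \<Longrightarrow>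
      \<bar>g (c + y) - (\<Sum>m<n. (deriv ^^ m) g c / fact m * y ^ m)\<bar> \<le> C * \<bar>y\<bar> ^ n"
    using smooth_fun_taylor_uniform[OF assms(1,2)] by blast
  have "eventually (\<lambda>t. dist (p t) z < 1 \<and> dist (q t) z < 1) F"
    using tendstoD[OF assms(3), of 1] tendstoD[OF assms(4), of 1] by (simp add: eventually_conj)
  then show ?thesis
  proof (rule bigoI[OF eventually_mono])
    fix t assume "dist (p t) z < 1 \<and> dist (q t) z < 1"
    then show "norm (g (q t) - (\<Sum>m<n. (deriv ^^ m) g (p t) / fact m * (q t - p t) ^ m))
               \<le> C * norm ((q t - p t) ^ n)"
      using C[of "p t" "q t - p t"] by (simp add: dist_real_def power_abs abs_less_iff)
  qed
qed

lemma smooth_fun_taylor_bigo_at_0: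
  assumes "smooth_fun g" "0 < n"
  shows "(\<lambda>h. g (x + c * h) - (\<Sum>m<n. (deriv ^^ m) g x / fact m * (c * h) ^ m))
           \<in> O[at 0](\<lambda>h. h ^ n)"
proof -
  have "((\<lambda>h. x + c * h) \<longlongrightarrow> x) (at 0)"
    by (auto intro!: tendsto_eq_intros)
  from smooth_fun_taylor_bigo[OF assms tendsto_const this]
  have "(\<lambda>h. g (x + c * h) - (\<Sum>m<n. (deriv ^^ m) g x / fact m * (c * h) ^ m))
          \<in> O[at 0](\<lambda>h. (c * h) ^ n)"
    by simp
  also have "(\<lambda>h. (c * h) ^ n) \<in> O[at 0](\<lambda>h. h ^ n)"
    by (simp add: power_mult_distrib)
  finally show ?thesis .
qed

lemma smooth_fun_taylor_cubic_at_0: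
  assumes "smooth_fun g"
  shows "(\<lambda>h. g (x + c * h) - (g x + deriv g x * (c * h) + (deriv ^^ 2) g x / 2 * (c * h) ^ 2
           + (deriv ^^ 3) g x / 6 * (c * h) ^ 3)) \<in> O[at 0](\<lambda>h. h ^ 4)"
  using smooth_fun_taylor_bigo_at_0[OF assms, of 4 x c] by (simp add: eval_nat_numeral)

lemma second_difference_bigo:
  assumes "smooth_fun g"
  shows "(\<lambda>h. g (x + h) - 2 * g x + g (x - h) - (deriv ^^ 2) g x * h ^ 2) \<in> O[at 0](\<lambda>h. h ^ 4)"
  using sum_in_bigo(1)[OF smooth_fun_taylor_cubic_at_0[OF assms, of x 1]
                          smooth_fun_taylor_cubic_at_0[OF assms, of x "-1"]]
  by (simp add: algebra_simps)

lemma central_difference_bigo: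
  assumes "smooth_fun g"
  shows "(\<lambda>h. g (x + h / 2) - g (x - h / 2) - deriv g x * h - (deriv ^^ 3) g x / 24 * h ^ 3)
           \<in> O[at 0](\<lambda>h. h ^ 4)"
  using sum_in_bigo(2)[OF smooth_fun_taylor_cubic_at_0[OF assms, of x "1/2"]
                          smooth_fun_taylor_cubic_at_0[OF assms, of x "-1/2"]]
  by (simp add: algebra_simps power_divide)

lemma bigo_power_at_0:
  assumes "n \<le> k"
  shows "(\<lambda>h::real. h ^ k) \<in> O[at 0](\<lambda>h. h ^ n)"
proof (rule bigoI[of _ 1])
  have "eventually (\<lambda>h::real. \<bar>h\<bar> < 1) (at 0)"
    unfolding eventually_at by (rule exI[of _ 1]) (auto simp: dist_real_def)
  then show "eventually (\<lambda>h::real. norm (h ^ k) \<le> 1 * norm (h ^ n)) (at 0)"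
    by eventually_elim (use assms in \<open>auto simp: power_abs intro: power_decreasing\<close>)
qed

lemma bigo_divide_at_0:
  assumes "f \<in> O[at 0](\<lambda>h::real. h ^ Suc n)"
  shows "(\<lambda>h. f h / h) \<in> O[at 0](\<lambda>h. h ^ n)"
proof -
  have nonzero: "eventually (\<lambda>h::real. h \<noteq> 0) (at 0)"
    by (simp add: eventually_at_filter)
  then have "eventually (\<lambda>h::real. h ^ Suc n / h = h ^ n) (at 0)"
    by eventually_elim simp
  then have "(\<lambda>h::real. h ^ Suc n / h) \<in> O[at 0](\<lambda>h. h ^ n)"
    by (simp add: landau_o.big.in_cong)
  with landau_o.big.divide_right[OF nonzero assms] show ?thesis
    by (rule landau_o.big_trans)
qed

lemma bigo_at_0_imp_tendsto:
  assumes "(\<lambda>h. a h - z) \<in> O[at 0](\<lambda>h::real. h)"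
  shows "(a \<longlongrightarrow> z) (at 0)"
proof -
  obtain c where "eventually (\<lambda>h. norm (a h - z) \<le> c * norm h) (at 0)"
    using assms by (auto elim: landau_o.bigE)
  moreover have "((\<lambda>h::real. c * norm h) \<longlongrightarrow> 0) (at 0)"
    by (auto intro!: tendsto_eq_intros)
  ultimately have "((\<lambda>h. a h - z) \<longlongrightarrow> 0) (at 0)"
    by (rule Lim_null_comparison)
  then show ?thesis by (rule LIM_zero_cancel)
qed

lemma tendsto_imp_bigo_1:
  fixes f :: "'a \<Rightarrow> real"
  assumes "(f \<longlongrightarrow> c) F"
  shows "f \<in> O[F](\<lambda>_. 1)"
  using assms by (intro bigoI_tendsto[where c = c]) simp_all

lemma between_bigo:
  fixes a b c :: "'a \<Rightarrow> real"
  assumes "\<And>t. min (a t) (b t) \<le> c t \<and> c t \<le> max (a t) (b t)"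
    and "(\<lambda>t. a t - z) \<in> O[F](G)" "(\<lambda>t. b t - z) \<in> O[F](G)"
  shows "(\<lambda>t. c t - z) \<in> O[F](G)"
proof -
  have "(\<lambda>t. c t - z) \<in> O[F](\<lambda>t. \<bar>a t - z\<bar> + \<bar>b t - z\<bar>)"
  proof (rule bigoI[of _ 1], rule always_eventually, rule allI)
    fix t show "norm (c t - z) \<le> 1 * norm (\<bar>a t - z\<bar> + \<bar>b t - z\<bar>)"
      using assms(1)[of t] by (auto simp: min_def max_def split: if_splits)
  qed
  also have "(\<lambda>t. \<bar>a t - z\<bar> + \<bar>b t - z\<bar>) \<in> O[F](G)"
    using assms(2,3) by (intro sum_in_bigo) simp_all
  finally show ?thesis .
qed

lemma central_flux_bigo:
  assumes "smooth_fun f" "(a \<longlongrightarrow> z) F" "(b \<longlongrightarrow> z) F" "(c \<longlongrightarrow> z) F"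
    and "(\<lambda>t. a t + b t - 2 * c t) \<in> O[F](G)"
    and "(\<lambda>t. (a t - c t) ^ 2) \<in> O[F](G)" "(\<lambda>t. (b t - c t) ^ 2) \<in> O[F](G)"
  shows "(\<lambda>t. (f (a t) + f (b t)) / 2 - f (c t)) \<in> O[F](G)"
proof -
  have taylor: "(\<lambda>t. f (p t) - (f (c t) + deriv f (c t) * (p t - c t))) \<in> O[F](G)"
    if "(p \<longlongrightarrow> z) F" "(\<lambda>t. (p t - c t) ^ 2) \<in> O[F](G)" for p
    using landau_o.big_trans[OF smooth_fun_taylor_bigo[OF assms(1), of 2 c z F p] that(2)] assms(4) that(1)
    by (simp add: eval_nat_numeral)
  have "((\<lambda>t. deriv f (c t)) \<longlongrightarrow> deriv f z) F"
    using smooth_fun_isCont[OF assms(1), where n = 1] assms(4) by (simp add: isCont_tendsto_compose)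
  then have "(\<lambda>t. deriv f (c t) * (a t + b t - 2 * c t)) \<in> O[F](\<lambda>t. 1 * G t)"
    by (intro landau_o.big.mult tendsto_imp_bigo_1 assms(5))
  moreover have "(\<lambda>t. (f (a t) + f (b t)) / 2 - f (c t))
      = (\<lambda>t. (f (a t) - (f (c t) + deriv f (c t) * (a t - c t))) / 2
              + (f (b t) - (f (c t) + deriv f (c t) * (b t - c t))) / 2
              + deriv f (c t) * (a t + b t - 2 * c t) / 2)"
    by (simp add: fun_eq_iff field_simps)
  ultimately show ?thesis
    using taylor[OF assms(2,6)] taylor[OF assms(3,7)] by (simp add: sum_in_bigo)
qed

lemma dissipation_difference_bigo:
  assumes "smooth_fun f" "(p \<longlongrightarrow> z) F" "(q \<longlongrightarrow> z) F"
    and "(\<lambda>t. J t - K t) \<in> O[F](G)" "(\<lambda>t. (p t - q t) * K t) \<in> O[F](G)"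
  shows "(\<lambda>t. \<bar>deriv f (p t)\<bar> * J t - \<bar>deriv f (q t)\<bar> * K t) \<in> O[F](G)"
proof -
  have "(\<lambda>t. \<bar>deriv f (p t)\<bar> - \<bar>deriv f (q t)\<bar>) \<in> O[F](\<lambda>t. deriv f (p t) - deriv f (q t))"
    by (intro bigoI[of _ 1] always_eventually allI) (simp add: abs_triangle_ineq3)
  also have "(\<lambda>t. deriv f (p t) - deriv f (q t)) \<in> O[F](\<lambda>t. p t - q t)"
    using smooth_fun_taylor_bigo[OF smooth_fun_deriv[OF assms(1)], of 1 q z F p] assms(2,3) by simp
  finally have "(\<lambda>t. (\<bar>deriv f (p t)\<bar> - \<bar>deriv f (q t)\<bar>) * K t) \<in> O[F](G)"
    using assms(5) by (rule landau_o.big_trans[OF landau_o.big.mult_right])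
  moreover have "((\<lambda>t. \<bar>deriv f (p t)\<bar>) \<longlongrightarrow> \<bar>deriv f z\<bar>) F"
    using smooth_fun_isCont[OF assms(1), where n = 1] assms(2)
    by (intro tendsto_rabs) (simp add: isCont_tendsto_compose)
  then have "(\<lambda>t. \<bar>deriv f (p t)\<bar> * (J t - K t)) \<in> O[F](\<lambda>t. 1 * G t)"
    by (intro landau_o.big.mult tendsto_imp_bigo_1 assms(4))
  moreover have "(\<lambda>t. \<bar>deriv f (p t)\<bar> * J t - \<bar>deriv f (q t)\<bar> * K t)
      = (\<lambda>t. \<bar>deriv f (p t)\<bar> * (J t - K t) + (\<bar>deriv f (p t)\<bar> - \<bar>deriv f (q t)\<bar>) * K t)"
    by (simp add: fun_eq_iff algebra_simps)
  ultimately show ?thesis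
    by (simp add: sum_in_bigo)
qed

definition grid :: "(real \<Rightarrow> real) \<Rightarrow> real \<Rightarrow> real \<Rightarrow> int \<Rightarrow> real" where
  "grid g x h k = g (x + of_int k * h)"

lemma muscl_uL_add: "muscl_uL \<kappa> (\<lambda>k. U k + W k) j = muscl_uL \<kappa> U j + muscl_uL \<kappa> W j"
  by (simp add: muscl_uL_def algebra_simps)

lemma muscl_uR_add: "muscl_uR \<kappa> (\<lambda>k. U k + W k) j = muscl_uR \<kappa> U j + muscl_uR \<kappa> W j"
  by (simp add: muscl_uR_def algebra_simps)

lemma muscl_uL_bigo:
  assumes "\<And>k. (\<lambda>t. U t k) \<in> O[F](G)"
  shows "(\<lambda>t. muscl_uL \<kappa> (U t) j) \<in> O[F](G)"
  unfolding muscl_uL_def by (auto intro!: sum_in_bigo assms)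

lemma muscl_uR_bigo:
  assumes "\<And>k. (\<lambda>t. U t k) \<in> O[F](G)"
  shows "(\<lambda>t. muscl_uR \<kappa> (U t) j) \<in> O[F](G)"
  unfolding muscl_uR_def by (auto intro!: sum_in_bigo assms)

lemma muscl_face_sum_cubic:
  assumes "\<And>y. Q y = a0 + a1 * y + a2 * y ^ 2 + a3 * y ^ 3"
  shows "muscl_uL (1/2) (\<lambda>k. Q (of_int k * h)) j + muscl_uR (1/2) (\<lambda>k. Q (of_int k * h)) j
           = 2 * Q ((of_int j + 1/2) * h)"
  by (simp add: muscl_uL_def muscl_uR_def assms power2_eq_square power3_eq_cube algebra_simps)

lemma muscl_jump_cubic:
  assumes "\<And>y. Q y = a0 + a1 * y + a2 * y ^ 2 + a3 * y ^ 3"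
  shows "muscl_uR (1/2) (\<lambda>k. Q (of_int k * h)) j - muscl_uL (1/2) (\<lambda>k. Q (of_int k * h)) j
           = - 3/4 * a3 * h ^ 3"
  by (simp add: muscl_uL_def muscl_uR_def assms power2_eq_square power3_eq_cube algebra_simps)

lemma muscl_face_sum_and_jump_bigo:
  assumes "smooth_fun g"
  shows "(\<lambda>h. muscl_uL (1/2) (grid g x h) j + muscl_uR (1/2) (grid g x h) j
            - 2 * g (x + (of_int j + 1/2) * h)) \<in> O[at 0](\<lambda>h. h ^ 4)"
    and "(\<lambda>h. muscl_uR (1/2) (grid g x h) j - muscl_uL (1/2) (grid g x h) j
            + (deriv ^^ 3) g x / 8 * h ^ 3) \<in> O[at 0](\<lambda>h. h ^ 4)"
proof -
  define Q where "Q y = g x + deriv g x * y + (deriv ^^ 2) g x / 2 * y ^ 2 + (deriv ^^ 3) g x / 6 * y ^ 3" for y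
  define r where "r h c = g (x + c * h) - Q (c * h)" for h c
  have r: "(\<lambda>h. r h c) \<in> O[at 0](\<lambda>h. h ^ 4)" for c
    unfolding r_def Q_def by (rule smooth_fun_taylor_cubic_at_0[OF assms])
  have grid: "grid g x h = (\<lambda>k. Q (of_int k * h) + r h (of_int k))" for h
    by (simp add: grid_def r_def fun_eq_iff)
  have Q: "Q y = g x + deriv g x * y + (deriv ^^ 2) g x / 2 * y ^ 2 + (deriv ^^ 3) g x / 6 * y ^ 3" for y
    by (simp add: Q_def)
  have g_face: "g (x + (of_int j + 1/2) * h) = Q ((of_int j + 1/2) * h) + r h (of_int j + 1/2)" for h
    by (simp add: r_def mult.commute)
  have "muscl_uL (1/2) (grid g x h) j + muscl_uR (1/2) (grid g x h) j - 2 * g (x + (of_int j + 1/2) * h)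
      = muscl_uL (1/2) (\<lambda>k. r h (of_int k)) j + muscl_uR (1/2) (\<lambda>k. r h (of_int k)) j
        - 2 * r h (of_int j + 1/2)" for h
    using muscl_face_sum_cubic[OF Q, of h j] by (simp add: grid muscl_uL_add muscl_uR_add g_face)
  then show "(\<lambda>h. muscl_uL (1/2) (grid g x h) j + muscl_uR (1/2) (grid g x h) j
            - 2 * g (x + (of_int j + 1/2) * h)) \<in> O[at 0](\<lambda>h. h ^ 4)"
    by (auto intro!: sum_in_bigo muscl_uL_bigo muscl_uR_bigo r)
  have "muscl_uR (1/2) (grid g x h) j - muscl_uL (1/2) (grid g x h) j + (deriv ^^ 3) g x / 8 * h ^ 3
      = muscl_uR (1/2) (\<lambda>k. r h (of_int k)) j - muscl_uL (1/2) (\<lambda>k. r h (of_int k)) j" for h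
    using muscl_jump_cubic[OF Q, of h j] by (simp add: grid muscl_uL_add muscl_uR_add)
  then show "(\<lambda>h. muscl_uR (1/2) (grid g x h) j - muscl_uL (1/2) (grid g x h) j
            + (deriv ^^ 3) g x / 8 * h ^ 3) \<in> O[at 0](\<lambda>h. h ^ 4)"
    by (auto intro!: sum_in_bigo muscl_uL_bigo muscl_uR_bigo r)
qed

lemma muscl_face_states_bigo:
  fixes x :: real and j :: int
  assumes "smooth_fun g"
  defines "L \<equiv> \<lambda>h. muscl_uL (1/2) (grid g x h) j" and "R \<equiv> \<lambda>h. muscl_uR (1/2) (grid g x h) j"
    and "w \<equiv> \<lambda>h. g (x + (of_int j + 1/2) * h)"
  shows "(\<lambda>h. R h - L h) \<in> O[at 0](\<lambda>h. h ^ 3)"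
    and "(\<lambda>h. L h - w h) \<in> O[at 0](\<lambda>h. h ^ 3)" "(\<lambda>h. R h - w h) \<in> O[at 0](\<lambda>h. h ^ 3)"
    and "(\<lambda>h. L h - g x) \<in> O[at 0](\<lambda>h. h)" "(\<lambda>h. R h - g x) \<in> O[at 0](\<lambda>h. h)"
proof -
  have "(\<lambda>h. L h + R h - 2 * w h) \<in> O[at 0](\<lambda>h. h ^ 4)"
    using muscl_face_sum_and_jump_bigo(1)[OF assms(1), of x j] by (simp add: L_def R_def w_def)
  then have face_sum: "(\<lambda>h. L h + R h - 2 * w h) \<in> O[at 0](\<lambda>h. h ^ 3)"
    by (rule landau_o.big_trans[OF _ bigo_power_at_0]) simp
  define c where "c = (deriv ^^ 3) g x / 8"
  have "(\<lambda>h. R h - L h + c * h ^ 3) \<in> O[at 0](\<lambda>h. h ^ 4)"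
    using muscl_face_sum_and_jump_bigo(2)[OF assms(1), of x j] by (simp add: L_def R_def c_def)
  then have "(\<lambda>h. R h - L h + c * h ^ 3) \<in> O[at 0](\<lambda>h. h ^ 3)"
    by (rule landau_o.big_trans[OF _ bigo_power_at_0]) simp
  then have "(\<lambda>h. (R h - L h + c * h ^ 3) - c * h ^ 3) \<in> O[at 0](\<lambda>h. h ^ 3)"
    by (rule sum_in_bigo(2)) simp
  then show RL: "(\<lambda>h. R h - L h) \<in> O[at 0](\<lambda>h. h ^ 3)"
    by simp
  have half_face_sum: "(\<lambda>h. (L h + R h - 2 * w h) / 2) \<in> O[at 0](\<lambda>h. h ^ 3)"
    and half_jump: "(\<lambda>h. (R h - L h) / 2) \<in> O[at 0](\<lambda>h. h ^ 3)"
    using face_sum RL by simp_all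
  have "(\<lambda>h. L h - w h) = (\<lambda>h. (L h + R h - 2 * w h) / 2 - (R h - L h) / 2)"
    and "(\<lambda>h. R h - w h) = (\<lambda>h. (L h + R h - 2 * w h) / 2 + (R h - L h) / 2)"
    by (simp_all add: fun_eq_iff field_simps)
  then show Lw: "(\<lambda>h. L h - w h) \<in> O[at 0](\<lambda>h. h ^ 3)"
    and Rw: "(\<lambda>h. R h - w h) \<in> O[at 0](\<lambda>h. h ^ 3)"
    using sum_in_bigo[OF half_face_sum half_jump] by simp_all
  have w: "(\<lambda>h. w h - g x) \<in> O[at 0](\<lambda>h. h)"
    using smooth_fun_taylor_bigo_at_0[OF assms(1), of 1 x "of_int j + 1/2"] by (simp add: w_def)
  have h3: "(\<lambda>h::real. h ^ 3) \<in> O[at 0](\<lambda>h. h)"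
    using bigo_power_at_0[of 1 3] by simp
  show "(\<lambda>h. L h - g x) \<in> O[at 0](\<lambda>h. h)"
    using sum_in_bigo(1)[OF landau_o.big_trans[OF Lw h3] w] by simp
  show "(\<lambda>h. R h - g x) \<in> O[at 0](\<lambda>h. h)"
    using sum_in_bigo(1)[OF landau_o.big_trans[OF Rw h3] w] by simp
qed

lemma face_flux_average_bigo:
  fixes x :: real and j :: int
  assumes "smooth_fun f" "smooth_fun g"
  defines "L \<equiv> \<lambda>h. muscl_uL (1/2) (grid g x h) j" and "R \<equiv> \<lambda>h. muscl_uR (1/2) (grid g x h) j"
    and "w \<equiv> \<lambda>h. g (x + (of_int j + 1/2) * h)"
  shows "(\<lambda>h. (f (L h) + f (R h)) / 2 - f (w h)) \<in> O[at 0](\<lambda>h. h ^ 4)"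
proof (rule central_flux_bigo[OF assms(1)])
  note est = muscl_face_states_bigo[OF assms(2), of x j, folded L_def R_def w_def]
  show "(L \<longlongrightarrow> g x) (at 0)" "(R \<longlongrightarrow> g x) (at 0)"
    using est(4,5) by (simp_all add: L_def R_def bigo_at_0_imp_tendsto)
  show "(w \<longlongrightarrow> g x) (at 0)"
    unfolding w_def using smooth_fun_isCont[OF assms(2), where n = 0]
    by (auto intro!: isCont_tendsto_compose[where g = g] tendsto_eq_intros)
  show "(\<lambda>h. L h + R h - 2 * w h) \<in> O[at 0](\<lambda>h. h ^ 4)"
    using muscl_face_sum_and_jump_bigo(1)[OF assms(2), of x j] by (simp add: L_def R_def w_def)
  have h6: "(\<lambda>h::real. (h ^ 3) ^ 2) \<in> O[at 0](\<lambda>h. h ^ 4)"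
    using bigo_power_at_0[of 4 6] by (simp flip: power_mult)
  show "(\<lambda>h. (L h - w h) ^ 2) \<in> O[at 0](\<lambda>h. h ^ 4)" "(\<lambda>h. (R h - w h) ^ 2) \<in> O[at 0](\<lambda>h. h ^ 4)"
    using landau_o.big_trans[OF landau_o.big_power h6] est(2,3) by (simp_all add: L_def R_def w_def)
qed

lemma face_dissipation_difference_bigo:
  fixes x :: real and j :: int
  assumes "smooth_fun f" "smooth_fun g" and m_between: "\<And>a b. min a b \<le> m a b \<and> m a b \<le> max a b"
  defines "L \<equiv> \<lambda>i h. muscl_uL (1/2) (grid g x h) i" and "R \<equiv> \<lambda>i h. muscl_uR (1/2) (grid g x h) i"
  shows "(\<lambda>h. \<bar>deriv f (m (L j h) (R j h))\<bar> * (R j h - L j h)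
            - \<bar>deriv f (m (L (j - 1) h) (R (j - 1) h))\<bar> * (R (j - 1) h - L (j - 1) h))
         \<in> O[at 0](\<lambda>h. h ^ 4)"
proof -
  have mid: "(\<lambda>h. m (L i h) (R i h) - g x) \<in> O[at 0](\<lambda>h. h)" for i
    using muscl_face_states_bigo(4,5)[OF assms(2), of x i]
    by (intro between_bigo[OF m_between]) (simp_all add: L_def R_def)
  define c where "c = (deriv ^^ 3) g x / 8"
  have jump: "(\<lambda>h. R i h - L i h + c * h ^ 3) \<in> O[at 0](\<lambda>h. h ^ 4)" for i
    using muscl_face_sum_and_jump_bigo(2)[OF assms(2), of x i] by (simp add: L_def R_def c_def)
  have "(\<lambda>h. ((m (L j h) (R j h) - g x) - (m (L (j - 1) h) (R (j - 1) h) - g x))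
          * (R (j - 1) h - L (j - 1) h)) \<in> O[at 0](\<lambda>h. h * h ^ 3)"
    using muscl_face_states_bigo(1)[OF assms(2), of x "j - 1"]
    by (intro landau_o.big.mult[OF sum_in_bigo(2)[OF mid mid]]) (simp add: L_def R_def)
  then have "(\<lambda>h. (m (L j h) (R j h) - m (L (j - 1) h) (R (j - 1) h)) * (R (j - 1) h - L (j - 1) h))
      \<in> O[at 0](\<lambda>h. h ^ 4)"
    by (simp add: power_Suc[symmetric] del: power_Suc)
  moreover have "(\<lambda>h. (R j h - L j h + c * h ^ 3) - (R (j - 1) h - L (j - 1) h + c * h ^ 3))
      \<in> O[at 0](\<lambda>h. h ^ 4)"
    using jump[of j] jump[of "j - 1"] by (rule sum_in_bigo)
  moreover have "((\<lambda>h. m (L i h) (R i h)) \<longlongrightarrow> g x) (at 0)" for i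
    using mid by (rule bigo_at_0_imp_tendsto)
  ultimately show ?thesis
    by (intro dissipation_difference_bigo[OF assms(1)]) simp_all
qed

lemma num_flux_difference_bigo:
  fixes x :: real and j :: int
  assumes "smooth_fun f" "smooth_fun g" and m_between: "\<And>a b. min a b \<le> m a b \<and> m a b \<le> max a b"
  shows "(\<lambda>h. num_flux f m (1/2) (grid g x h) j - num_flux f m (1/2) (grid g x h) (j - 1)
            - (f (g (x + (of_int j + 1/2) * h)) - f (g (x + (of_int j - 1/2) * h)))) \<in> O[at 0](\<lambda>h. h ^ 4)"
proof -
  define L where "L i h = muscl_uL (1/2) (grid g x h) i" for i h
  define R where "R i h = muscl_uR (1/2) (grid g x h) i" for i h
  define w where "w i h = g (x + (of_int i + 1/2) * h)" for i h
  define E where "E i h = (f (L i h) + f (R i h)) / 2 - f (w i h)" for i h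
  define D where "D i h = \<bar>deriv f (m (L i h) (R i h))\<bar> * (R i h - L i h)" for i h
  have avg: "E i \<in> O[at 0](\<lambda>h. h ^ 4)" for i
    unfolding E_def L_def R_def w_def by (rule face_flux_average_bigo[OF assms(1,2)])
  have diss: "(\<lambda>h. D j h - D (j - 1) h) \<in> O[at 0](\<lambda>h. h ^ 4)"
    unfolding D_def L_def R_def by (rule face_dissipation_difference_bigo[OF assms])
  then have "(\<lambda>h. (D j h - D (j - 1) h) / 2) \<in> O[at 0](\<lambda>h. h ^ 4)"
    by simp
  with avg[of j] avg[of "j - 1"]
  have "(\<lambda>h. E j h - E (j - 1) h - (D j h - D (j - 1) h) / 2) \<in> O[at 0](\<lambda>h. h ^ 4)"
    by (intro sum_in_bigo)
  moreover have "w j h = g (x + (of_int j + 1/2) * h)" "w (j - 1) h = g (x + (of_int j - 1/2) * h)" for h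
    by (simp_all add: w_def algebra_simps)
  then have "(\<lambda>h. num_flux f m (1/2) (grid g x h) j - num_flux f m (1/2) (grid g x h) (j - 1)
            - (f (g (x + (of_int j + 1/2) * h)) - f (g (x + (of_int j - 1/2) * h))))
      = (\<lambda>h. E j h - E (j - 1) h - (D j h - D (j - 1) h) / 2)"
    by (simp add: fun_eq_iff num_flux_def Let_def E_def D_def L_def R_def field_simps)
  ultimately show ?thesis
    by simp
qed

text \<open>The PDE gives the derivative of f \<circ> u as s - u_t; this makes f \<circ> u smooth without a chain
  rule for higher derivatives.\<close>

lemma composite_flux_smooth:
  assumes f: "smooth_fun f" and g: "smooth_fun g" and V: "smooth_fun V" and S: "smooth_fun S"
    and pde: "\<And>y. V y + deriv (\<lambda>y. f (g y)) y = S y"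
  shows "smooth_fun (\<lambda>y. f (g y))"
    and "deriv (\<lambda>y. f (g y)) x = S x - V x"
    and "(deriv ^^ 3) (\<lambda>y. f (g y)) x = (deriv ^^ 2) S x - (deriv ^^ 2) V x"
proof -
  have \<Phi>': "((\<lambda>y. f (g y)) has_real_derivative S y - V y) (at y)" for y
  proof -
    have chain: "((\<lambda>y. f (g y)) has_real_derivative deriv f (g y) * deriv g y) (at y)"
      using smooth_fun_has_real_derivative[OF f, of 0] smooth_fun_has_real_derivative[OF g, of 0]
      by (auto intro: DERIV_chain2)
    with pde[of y] DERIV_imp_deriv[OF chain] have "S y - V y = deriv f (g y) * deriv g y"
      by linarith
    with chain show ?thesis by simp
  qed
  show "smooth_fun (\<lambda>y. f (g y))"
    by (rule smooth_fun_primitive[OF \<Phi>' smooth_fun_diff[OF S V]])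
  show "deriv (\<lambda>y. f (g y)) x = S x - V x"
    and "(deriv ^^ 3) (\<lambda>y. f (g y)) x = (deriv ^^ 2) S x - (deriv ^^ 2) V x"
    using DERIV_imp_deriv[OF \<Phi>'] deriv_funpow_primitive[OF \<Phi>', of 2] deriv_funpow_diff[OF S V, of 2]
    by (simp_all add: numeral_3_eq_3)
qed

lemma trunc_err_bigo_at_0:
  assumes f: "smooth_fun f" and m_between: "\<And>a b. min a b \<le> m a b \<and> m a b \<le> max a b"
    and g: "smooth_fun (\<lambda>y. u y t)" and V: "smooth_fun (\<lambda>y. deriv (\<lambda>\<tau>. u y \<tau>) t)"
    and S: "smooth_fun (\<lambda>y. s y t)"
    and pde: "\<And>y. deriv (\<lambda>\<tau>. u y \<tau>) t + deriv (\<lambda>y. f (u y t)) y = s y t"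
  shows "(\<lambda>h. trunc_err f m (1/2) u s h x t) \<in> O[at 0](\<lambda>h. h ^ 3)"
proof -
  define g where "g y = u y t" for y
  define V where "V y = deriv (\<lambda>\<tau>. u y \<tau>) t" for y
  define S where "S y = s y t" for y
  define \<Phi> where "\<Phi> y = f (g y)" for y
  have g: "smooth_fun g" and V: "smooth_fun V" and S: "smooth_fun S"
    using g V S by (simp_all add: g_def [abs_def] V_def [abs_def] S_def [abs_def])
  have "V y + deriv (\<lambda>y. f (g y)) y = S y" for y
    using pde by (simp add: g_def V_def S_def)
  note \<Phi> = composite_flux_smooth[OF f g V S this, folded \<Phi>_def [abs_def]]
  define rV where "rV h = V (x + h) - 2 * V x + V (x - h) - (deriv ^^ 2) V x * h ^ 2" for h
  define rS where "rS h = S (x + h) - 2 * S x + S (x - h) - (deriv ^^ 2) S x * h ^ 2" for h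
  define r\<Phi> where
    "r\<Phi> h = \<Phi> (x + h / 2) - \<Phi> (x - h / 2) - deriv \<Phi> x * h - (deriv ^^ 3) \<Phi> x / 24 * h ^ 3" for h
  define rF where "rF h = num_flux f m (1/2) (grid g x h) 0 - num_flux f m (1/2) (grid g x h) (-1)
            - (\<Phi> (x + h / 2) - \<Phi> (x - h / 2))" for h
  have "eventually (\<lambda>h. trunc_err f m (1/2) u s h x t = rV h / 24 - rS h / 24 + (rF h + r\<Phi> h) / h) (at 0)"
  proof (rule eventually_mono[OF eventually_neq_at_within[of 0 0 UNIV]])
    fix h :: real assume "h \<noteq> 0"
    have "(\<lambda>k::int. u (x + of_int k * h) t) = grid g x h"
      and "(\<lambda>k::int. deriv (\<lambda>\<tau>. u (x + of_int k * h) \<tau>) t) = (\<lambda>k. V (x + of_int k * h))"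
      and "(\<lambda>k::int. s (x + of_int k * h) t) = (\<lambda>k. S (x + of_int k * h))"
      by (simp_all add: fun_eq_iff grid_def g_def V_def S_def)
    with \<open>h \<noteq> 0\<close> show "trunc_err f m (1/2) u s h x t = rV h / 24 - rS h / 24 + (rF h + r\<Phi> h) / h"
      unfolding trunc_err_def
      by (simp add: Let_def rV_def rS_def r\<Phi>_def rF_def \<Phi>(2,3) field_simps
          power2_eq_square power3_eq_cube)
  qed
  moreover have "(\<lambda>h. rV h / 24 - rS h / 24 + (rF h + r\<Phi> h) / h) \<in> O[at 0](\<lambda>h. h ^ 3)"
  proof (intro sum_in_bigo bigo_divide_at_0)
    show "(\<lambda>h. rV h / 24) \<in> O[at 0](\<lambda>h. h ^ 3)" "(\<lambda>h. rS h / 24) \<in> O[at 0](\<lambda>h. h ^ 3)"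
      using second_difference_bigo[OF V, of x] second_difference_bigo[OF S, of x]
      by (auto simp: rV_def [abs_def] rS_def [abs_def] intro: landau_o.big_trans[OF _ bigo_power_at_0])
    show "rF \<in> O[at 0](\<lambda>h. h ^ Suc 3)" "r\<Phi> \<in> O[at 0](\<lambda>h. h ^ Suc 3)"
      using num_flux_difference_bigo[OF f g m_between, of x 0] central_difference_bigo[OF \<Phi>(1), of x]
      by (simp_all add: rF_def [abs_def] r\<Phi>_def [abs_def] \<Phi>_def)
  qed
  ultimately show ?thesis
    by (simp add: landau_o.big.in_cong)
qed

theorem mainTheorem2:
  fixes f :: "real \<Rightarrow> real" and m :: "real \<Rightarrow> real \<Rightarrow> real"
    and u s :: "real \<Rightarrow> real \<Rightarrow> real"
  assumes f_smooth: "smooth_fun f"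
    and m_between: "\<And>a b. min a b \<le> m a b \<and> m a b \<le> max a b"
    and u_x_smooth: "\<And>t. smooth_fun (\<lambda>x. u x t)"
    and u_t_diff: "\<And>x t. (\<lambda>\<tau>. u x \<tau>) differentiable (at t)"
    and u_t_smooth: "\<And>t. smooth_fun (\<lambda>x. deriv (\<lambda>\<tau>. u x \<tau>) t)"
    and s_smooth: "\<And>t. smooth_fun (\<lambda>x. s x t)"
    and pde: "\<And>x t. deriv (\<lambda>\<tau>. u x \<tau>) t + deriv (\<lambda>y. f (u y t)) x = s x t"
  shows "\<forall>x t. (\<lambda>h. trunc_err f m (1/2) u s h x t) \<in> O[at_right 0](\<lambda>h. h ^ 3)"
proof (intro allI)
  fix x t
  have "(\<lambda>h. trunc_err f m (1/2) u s h x t) \<in> O[at 0](\<lambda>h. h ^ 3)"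
    by (rule trunc_err_bigo_at_0[OF f_smooth m_between u_x_smooth u_t_smooth s_smooth pde])
  then show "(\<lambda>h. trunc_err f m (1/2) u s h x t) \<in> O[at_right 0](\<lambda>h. h ^ 3)"
    by (rule landau_o.big.filter_mono[rotated]) (simp add: at_le)
qed

end
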